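(* Let $B\subset\mathbb{H}$ have horizontal super-linear growth, i.e. there are constants $c\in(0,\infty)$ and $M<\infty$ such that $h_{x_1}\ge |c x_1|$ for all integers $x_1$ with $|x_1|\ge M$, where $h_{x_1}=\sup\{x_2\ge 0:\ \{x_1\}\times\{1,2,\dots,x_2\}\subset B\}$. Then for every $x\in B$, $$\bar{\mathcal H}_B(x)=0.$$
   Context: $\mathbb{H}=\{(x_1,x_2)\in\mathbb{Z}^2:\ x_2\ge 0\}$ and $L_n=\{(x_1,n):x_1\in\mathbb{Z}\}$. $(S_n)_{n\ge0}$ is a simple random walk on $\mathbb{Z}^2$; $P_z$ denotes its law started at $z$. For $A\subset\mathbb{Z}^2$, $\bar\tau_A=\min\{n\ge0: S_n\in A\}$. For $B\subset\mathbb{H}$, $x\in B$ and $N\ge1$, define $$\bar{\mathcal H}_{B,N}(x)=\sum_{z\in L_N\setminus B}P_z\big(S_{\bar\tau_{B\cup L_0}}=x\big).$$ It is known that the limit $\bar{\mathcal H}_B(x)=\lim_{N\to\infty}\bar{\mathcal H}_{B,N}(x)$ exists and is finite for every $B\subset\mathbb{H}$ and $x\in B$; it is called the stationary harmonic measure of $x$ with respect to $B$. *)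

theory Defs
  imports "HOL-Probability.Probability"
begin

type_synonym pt = "int \<times> int"

definition upper_half :: "pt set" where
  "upper_half = {p. snd p \<ge> 0}"

definition hline :: "int \<Rightarrow> pt set" where
  "hline n = {p. snd p = n}"

definition srw_step :: "pt pmf" where
  "srw_step = pmf_of_set {(1,0), (-1,0), (0,1), (0,-1)}"

definition srw_space :: "pt stream measure" where
  "srw_space = stream_space (measure_pmf srw_step)"

definition walk :: "pt \<Rightarrow> pt stream \<Rightarrow> nat \<Rightarrow> pt" where
  "walk z w n = (fst z + (\<Sum>i<n. fst (w !! i)), snd z + (\<Sum>i<n. snd (w !! i)))"

definition hit_at :: "pt set \<Rightarrow> pt \<Rightarrow> pt \<Rightarrow> ennreal" where
  "hit_at A z x = emeasure srw_space
     {w \<in> space srw_space. \<exists>n. walk z w n \<in> A \<and> (\<forall>m<n. walk z w m \<notin> A) \<and> walk z w n = x}"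

definition harm_N :: "pt set \<Rightarrow> nat \<Rightarrow> pt \<Rightarrow> ennreal" where
  "harm_N B N x = (\<Sum>\<^sub>\<infinity>z \<in> hline (int N) - B. hit_at (B \<union> hline 0) z x)"

definition col_height :: "pt set \<Rightarrow> int \<Rightarrow> ereal" where
  "col_height B x1 = Sup {ereal (real_of_int x2) | x2. x2 \<ge> 0 \<and> (\<forall>y\<in>{1..x2}. (x1, y) \<in> B)}"

end

theory Submission
  imports Defs
begin

text \<open>Above some height \<open>H\<close> every point outside \<open>B\<close> lies in the cone \<open>c \<bar>x\<^sub>1\<bar> < x\<^sub>2\<close>, so a walk
  started on \<open>L\<^sub>N \<setminus> B\<close> can reach \<open>x \<in> B\<close> only after escaping below height \<open>H\<close> through
  the complement of \<open>B\<close>. The function \<open>Re ((x\<^sub>2 + i x\<^sub>1) powr -\<beta>)\<close> is harmonic and, for some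
  \<open>\<beta> > 1\<close>, comparable to \<open>x\<^sub>2 powr -\<beta>\<close> in a slightly wider cone; subtracting a small multiple of
  \<open>x\<^sub>2 powr -\<beta>\<close> makes it superharmonic for the lattice Laplacian at large heights. As a Lyapunov
  function it bounds the escape probability from \<open>L\<^sub>N\<close> by \<open>O(N powr -\<beta>)\<close>. Since \<open>L\<^sub>N \<setminus> B\<close>
  has only \<open>O(N)\<close> points, the harmonic measure \<open>harm_N B N x\<close> is \<open>O(N powr (1 - \<beta>))\<close>.\<close>

section \<open>Simple random walk\<close>

lemma walk_eq_sum: "walk z w n = z + (\<Sum>i<n. w !! i)"
  unfolding walk_def by (simp add: fst_sum snd_sum prod_eq_iff)

lemma walk_0 [simp]: "walk z w 0 = z"
  by (simp add: walk_eq_sum)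

lemma walk_Suc: "walk z w (Suc n) = walk z w n + w !! n"
  by (simp add: walk_eq_sum add.assoc)

lemma walk_Cons_Suc [simp]: "walk z (e ## w) (Suc n) = walk (z + e) w n"
  unfolding walk_eq_sum sum.lessThan_Suc_shift by (simp add: add.assoc)

lemma prob_space_srw_space: "prob_space srw_space"
  unfolding srw_space_def by (rule prob_space.prob_space_stream_space) (rule prob_space_measure_pmf)

lemma space_srw_space: "space srw_space = UNIV"
  unfolding srw_space_def by (simp add: space_stream_space streams_UNIV)

lemma measurable_snth_srw_space: "(\<lambda>w. w !! i) \<in> measurable srw_space (count_space UNIV)"
  unfolding srw_space_def
  using measurable_snth[of i "measure_pmf srw_step"]
  by (simp add: measurable_cong_sets[OF refl sets_measure_pmf_count_space])

lemma measurable_walk [measurable]: "(\<lambda>w. walk z w n) \<in> measurable srw_space (count_space UNIV)"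
proof (induction n)
  case (Suc n)
  have "(\<lambda>w. (walk z w n, w !! n)) \<in> measurable srw_space (count_space UNIV \<Otimes>\<^sub>M count_space UNIV)"
    using Suc measurable_snth_srw_space by (intro measurable_Pair) auto
  then have "(\<lambda>w. (walk z w n, w !! n)) \<in> measurable srw_space (count_space (UNIV :: (pt \<times> pt) set))"
    by (simp add: pair_measure_countable)
  then have "(\<lambda>w. case_prod (+) (walk z w n, w !! n)) \<in> measurable srw_space (count_space UNIV)"
    by (rule measurable_compose) simp
  then show ?case by (simp add: walk_Suc)
qed simp

lemma emeasure_srw_space_Cons:
  assumes "X \<in> sets srw_space"
  shows "emeasure srw_space X =
    (\<integral>\<^sup>+e. emeasure srw_space {w \<in> space srw_space. e ## w \<in> X} \<partial>measure_pmf srw_step)"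
  using assms unfolding srw_space_def
  by (rule prob_space.emeasure_stream_space[OF prob_space_measure_pmf])

definition srw_mean :: "(pt \<Rightarrow> ennreal) \<Rightarrow> pt \<Rightarrow> ennreal" where
  "srw_mean G p = (\<integral>\<^sup>+e. G (p + e) \<partial>measure_pmf srw_step)"

lemma srw_mean_eq:
  "srw_mean G p = (G (p + (1, 0)) + G (p + (-1, 0)) + G (p + (0, 1)) + G (p + (0, -1))) / 4"
  unfolding srw_mean_def srw_step_def by (subst nn_integral_pmf_of_set) (auto simp: add_ac)

definition reaches_via_within :: "nat \<Rightarrow> pt set \<Rightarrow> pt set \<Rightarrow> pt \<Rightarrow> pt stream \<Rightarrow> bool" where
  "reaches_via_within n D T p w \<longleftrightarrow> (\<exists>k<n. walk p w k \<in> T \<and> (\<forall>m<k. walk p w m \<in> D))"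

definition reaches_via :: "pt set \<Rightarrow> pt set \<Rightarrow> pt \<Rightarrow> pt stream \<Rightarrow> bool" where
  "reaches_via D T p w \<longleftrightarrow> (\<exists>k. walk p w k \<in> T \<and> (\<forall>m<k. walk p w m \<in> D))"

lemma sets_reaches_via_within [measurable]:
  "{w \<in> space srw_space. reaches_via_within n D T p w} \<in> sets srw_space"
  unfolding reaches_via_within_def by measurable

lemma sets_reaches_via [measurable]: "{w \<in> space srw_space. reaches_via D T p w} \<in> sets srw_space"
  unfolding reaches_via_def by measurable

lemma reaches_via_within_0 [simp]: "\<not> reaches_via_within 0 D T p w"
  by (simp add: reaches_via_within_def)

lemma reaches_via_within_Suc_Cons:
  "reaches_via_within (Suc n) D T p (e ## w) \<longleftrightarrow>
     p \<in> T \<or> (p \<in> D \<and> reaches_via_within n D T (p + e) w)"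
  unfolding reaches_via_within_def Ex_less_Suc2 All_less_Suc2 by auto

lemma emeasure_reaches_via_within_le:
  assumes "\<forall>p\<in>T. 1 \<le> G p" and "\<forall>p\<in>D - T. srw_mean G p \<le> G p"
  shows "emeasure srw_space {w \<in> space srw_space. reaches_via_within n D T p w} \<le> G p"
proof (induction n arbitrary: p)
  interpret prob_space srw_space by (rule prob_space_srw_space)
  case (Suc n)
  show ?case
  proof (cases "p \<in> T")
    case True
    have "emeasure srw_space {w \<in> space srw_space. reaches_via_within (Suc n) D T p w} \<le> 1"
      by (rule emeasure_le_1)
    also have "\<dots> \<le> G p" using assms(1) True by auto
    finally show ?thesis .
  next
    case False
    have "emeasure srw_space {w \<in> space srw_space. reaches_via_within (Suc n) D T p w} =
      (\<integral>\<^sup>+e. (if p \<in> D then emeasure srw_space {w \<in> space srw_space. reaches_via_within n D T (p + e) w}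
              else 0) \<partial>measure_pmf srw_step)"
      using False by (subst emeasure_srw_space_Cons[OF sets_reaches_via_within])
        (auto intro!: nn_integral_cong simp: reaches_via_within_Suc_Cons space_srw_space)
    also have "\<dots> \<le> (if p \<in> D then srw_mean G p else 0)"
      unfolding srw_mean_def by (auto intro!: nn_integral_mono Suc.IH)
    also have "\<dots> \<le> G p" using assms(2) False by auto
    finally show ?thesis .
  qed
qed simp

lemma emeasure_reaches_via_le:
  assumes "\<forall>p\<in>T. 1 \<le> G p" and "\<forall>p\<in>D - T. srw_mean G p \<le> G p"
  shows "emeasure srw_space {w \<in> space srw_space. reaches_via D T p w} \<le> G p"
proof -
  have union: "{w \<in> space srw_space. reaches_via D T p w} =
      (\<Union>n. {w \<in> space srw_space. reaches_via_within n D T p w})"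
    unfolding reaches_via_def reaches_via_within_def by blast
  have "incseq (\<lambda>n. {w \<in> space srw_space. reaches_via_within n D T p w})"
    unfolding incseq_def reaches_via_within_def by (auto intro: less_le_trans)
  then have "emeasure srw_space {w \<in> space srw_space. reaches_via D T p w} =
      (SUP n. emeasure srw_space {w \<in> space srw_space. reaches_via_within n D T p w})"
    unfolding union by (intro SUP_emeasure_incseq[symmetric]) auto
  also have "\<dots> \<le> G p" by (intro SUP_least emeasure_reaches_via_within_le[OF assms])
  finally show ?thesis .
qed

section \<open>A superharmonic barrier\<close>

lemma second_difference_Taylor:
  fixes \<phi> \<phi>1 \<phi>2 :: "real \<Rightarrow> real"
  assumes d1: "\<And>t. -1 \<le> t \<Longrightarrow> t \<le> 1 \<Longrightarrow> (\<phi> has_real_derivative \<phi>1 t) (at t)"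
    and d2: "\<And>t. -1 \<le> t \<Longrightarrow> t \<le> 1 \<Longrightarrow> (\<phi>1 has_real_derivative \<phi>2 t) (at t)"
  obtains t1 t2 where "-1 \<le> t1" "t1 \<le> 1" "-1 \<le> t2" "t2 \<le> 1"
    and "\<phi> 1 + \<phi> (-1) - 2 * \<phi> 0 = (\<phi>2 t1 + \<phi>2 t2) / 2"
proof -
  define diff where "diff = (\<lambda>m::nat. if m = 0 then \<phi> else if m = 1 then \<phi>1 else \<phi>2)"
  have D: "\<forall>m t. m < 2 \<and> -1 \<le> t \<and> t \<le> 1 \<longrightarrow> DERIV (diff m) t :> diff (Suc m) t"
    using d1 d2 by (auto simp: diff_def less_2_cases_iff)
  have d0: "diff 0 = \<phi>" by (simp add: diff_def)
  obtain t1 where t1: "0 < t1" "t1 < 1"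
    "\<phi> 1 = (\<Sum>m<2. diff m 0 / fact m * (1 - 0) ^ m) + diff 2 t1 / fact 2 * (1 - 0) ^ 2"
    using Taylor_up[OF _ d0 D, of 0] by auto
  obtain t2 where t2: "-1 < t2" "t2 < 0"
    "\<phi> (-1) = (\<Sum>m<2. diff m 0 / fact m * (-1 - 0) ^ m) + diff 2 t2 / fact 2 * (-1 - 0) ^ 2"
    using Taylor_down[OF _ d0 D, of 0] by auto
  have e1: "\<phi> 1 = \<phi> 0 + \<phi>1 0 + \<phi>2 t1 / 2" using t1(3) by (simp add: diff_def eval_nat_numeral)
  have e2: "\<phi> (-1) = \<phi> 0 - \<phi>1 0 + \<phi>2 t2 / 2" using t2(3) by (simp add: diff_def eval_nat_numeral)
  have "\<phi> 1 + \<phi> (-1) - 2 * \<phi> 0 = (\<phi>2 t1 + \<phi>2 t2) / 2" unfolding e1 e2 by simp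
  moreover have "-1 \<le> t1" "t1 \<le> 1" "-1 \<le> t2" "t2 \<le> 1" using t1(1,2) t2(1,2) by linarith+
  ultimately show ?thesis using that by blast
qed

lemma has_real_derivative_Re_along_line:
  fixes F :: "complex \<Rightarrow> complex"
  assumes "(F has_field_derivative F') (at (a + of_real s * d))"
  shows "((\<lambda>s. Re (F (a + of_real s * d))) has_real_derivative Re (d * F')) (at s)"
proof -
  have "((\<lambda>z. a + z * d) has_field_derivative d) (at (of_real s))"
    by (auto intro!: derivative_eq_intros)
  then have "((\<lambda>z. F (a + z * d)) has_field_derivative (d * F')) (at (of_real s))"
    using DERIV_chain2[where f = F and g = "\<lambda>z. a + z * d"] assms by (simp add: mult.commute)
  then have "((\<lambda>s. F (a + of_real s * d)) has_vector_derivative (d * F')) (at s)"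
    by (rule has_vector_derivative_real_field)
  then have "((\<lambda>s. Re (F (a + of_real s * d))) has_vector_derivative Re (d * F')) (at s)"
    by (rule bounded_linear.has_vector_derivative[OF bounded_linear_Re])
  then show ?thesis by (simp add: has_real_derivative_iff_has_vector_derivative)
qed

lemma has_field_derivative_scaled_powr:
  fixes z s K :: complex
  assumes "0 < Re z"
  shows "((\<lambda>z. K * z powr s) has_field_derivative (K * (s * z powr (s - 1)))) (at z)"
proof -
  have "z \<notin> \<real>\<^sub>\<le>\<^sub>0" using assms by (auto simp: nonpos_Reals_def)
  then show ?thesis by (intro DERIV_cmult has_field_derivative_powr)
qed

lemma Re_powr_second_difference:
  fixes w0 d :: complex and \<beta> :: real
  assumes Rw: "Re w0 \<ge> 2" and dn: "norm d = 1"
  obtains a1 a2 where "a1 \<in> cball w0 1" "a2 \<in> cball w0 1"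
    and "Re ((w0 + d) powr (- of_real \<beta>)) + Re ((w0 - d) powr (- of_real \<beta>))
           - 2 * Re (w0 powr (- of_real \<beta>))
         = (Re (d * d * of_real (\<beta> * (\<beta> + 1)) * a1 powr (- of_real \<beta> - 2))
          + Re (d * d * of_real (\<beta> * (\<beta> + 1)) * a2 powr (- of_real \<beta> - 2))) / 2"
proof -
  define s0 :: complex where "s0 = - of_real \<beta>"
  have Rz: "0 < Re (w0 + of_real t * d)" if "-1 \<le> t" "t \<le> 1" for t
  proof -
    have "\<bar>Re (of_real t * d)\<bar> \<le> norm (of_real t * d)" by (rule abs_Re_le_cmod)
    also have "\<dots> = \<bar>t\<bar>" using dn by (simp add: norm_mult)
    finally show ?thesis using that Rw by auto
  qed
  have d1: "((\<lambda>t. Re ((w0 + of_real t * d) powr s0)) has_real_derivative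
      Re (d * (s0 * (w0 + of_real t * d) powr (s0 - 1)))) (at t)"
    if "-1 \<le> t" "t \<le> 1" for t
    using has_real_derivative_Re_along_line[OF has_field_derivative_scaled_powr[OF Rz[OF that], where K = 1 and s = s0]]
    by simp
  have d2: "((\<lambda>t. Re (d * (s0 * (w0 + of_real t * d) powr (s0 - 1)))) has_real_derivative
      Re (d * (d * s0 * ((s0 - 1) * (w0 + of_real t * d) powr (s0 - 1 - 1))))) (at t)"
    if "-1 \<le> t" "t \<le> 1" for t
    using has_real_derivative_Re_along_line[OF has_field_derivative_scaled_powr[OF Rz[OF that], where K = "d * s0" and s = "s0 - 1"]]
    by (simp add: mult.assoc)
  have e: "d * (d * s0 * ((s0 - 1) * z)) = d * d * of_real (\<beta> * (\<beta> + 1)) * z" for z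
    by (simp add: s0_def algebra_simps)
  have e2: "s0 - 1 - 1 = - of_real \<beta> - 2" by (simp add: s0_def)
  obtain t1 t2 where t: "-1 \<le> t1" "t1 \<le> 1" "-1 \<le> t2" "t2 \<le> 1"
    and eq: "Re ((w0 + of_real 1 * d) powr s0) + Re ((w0 + of_real (-1) * d) powr s0)
       - 2 * Re ((w0 + of_real 0 * d) powr s0)
     = (Re (d * (d * s0 * ((s0 - 1) * (w0 + of_real t1 * d) powr (s0 - 1 - 1))))
      + Re (d * (d * s0 * ((s0 - 1) * (w0 + of_real t2 * d) powr (s0 - 1 - 1))))) / 2"
    by (rule second_difference_Taylor[OF d1 d2])
  have mem: "w0 + of_real t * d \<in> cball w0 1" if "-1 \<le> t" "t \<le> 1" for t
    using that dn by (simp add: dist_norm norm_mult)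
  have "Re ((w0 + d) powr (- of_real \<beta>)) + Re ((w0 - d) powr (- of_real \<beta>))
      - 2 * Re (w0 powr (- of_real \<beta>))
    = (Re (d * d * of_real (\<beta> * (\<beta> + 1)) * (w0 + of_real t1 * d) powr (- of_real \<beta> - 2))
     + Re (d * d * of_real (\<beta> * (\<beta> + 1)) * (w0 + of_real t2 * d) powr (- of_real \<beta> - 2))) / 2"
  proof -
    have r: "w0 + of_real 1 * d = w0 + d" "w0 + of_real (-1) * d = w0 - d" "w0 + of_real 0 * d = w0"
      by simp_all
    from eq[unfolded e e2 r] show ?thesis unfolding s0_def .
  qed
  then show ?thesis by (rule that[OF mem[OF t(1,2)] mem[OF t(3,4)]])
qed

lemma norm_powr_diff_le:
  fixes w0 a b :: complex and \<beta> :: real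
  assumes Rw: "Re w0 \<ge> 2" and b0: "0 < \<beta>" and a: "a \<in> cball w0 1" and b: "b \<in> cball w0 1"
  shows "norm (a powr (- of_real \<beta> - 2) - b powr (- of_real \<beta> - 2))
    \<le> ((\<beta> + 2) * (Re w0 - 1) powr (- \<beta> - 3)) * norm (a - b)"
proof (rule field_differentiable_bound[OF convex_cball _ _ a b])
  fix z assume z: "z \<in> cball w0 1"
  have "\<bar>Re (w0 - z)\<bar> \<le> norm (w0 - z)" by (rule abs_Re_le_cmod)
  also have "\<dots> \<le> 1" using z by (simp add: dist_norm)
  finally have Rz: "Re w0 - 1 \<le> Re z" by simp
  then have "z \<notin> \<real>\<^sub>\<le>\<^sub>0" using Rw by (auto simp: nonpos_Reals_def)
  then show "((\<lambda>z. z powr (- of_real \<beta> - 2)) has_field_derivative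
      ((- of_real \<beta> - 2) * z powr (- of_real \<beta> - 2 - 1))) (at z within cball w0 1)"
    by (rule has_field_derivative_at_within[OF has_field_derivative_powr])
  have "(- of_real \<beta> - 2 :: complex) = of_real (- (\<beta> + 2))" by (simp add: algebra_simps)
  then have n1: "norm (- of_real \<beta> - 2 :: complex) = \<beta> + 2"
    using b0 by (simp only: norm_of_real)
  have "(- of_real \<beta> - 2 - 1 :: complex) = of_real (- \<beta> - 3)" by (simp add: algebra_simps)
  then have n2: "norm (z powr (- of_real \<beta> - 2 - 1)) = norm z powr (- \<beta> - 3)"
    by (metis norm_powr_real_powr' Reals_of_real Re_complex_of_real)
  have "Re w0 - 1 \<le> norm z" using Rz complex_Re_le_cmod[of z] by linarith
  then have "norm z powr (- \<beta> - 3) \<le> (Re w0 - 1) powr (- \<beta> - 3)"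
    using b0 Rw by (intro powr_mono2') auto
  then have "(\<beta> + 2) * norm z powr (- \<beta> - 3) \<le> (\<beta> + 2) * (Re w0 - 1) powr (- \<beta> - 3)"
    using b0 by (intro mult_left_mono) auto
  then show "norm ((- of_real \<beta> - 2) * z powr (- of_real \<beta> - 2 - 1))
      \<le> (\<beta> + 2) * (Re w0 - 1) powr (- \<beta> - 3)"
    by (simp only: norm_mult n1 n2)
qed

definition discrete_laplacian :: "(real \<Rightarrow> real \<Rightarrow> real) \<Rightarrow> real \<Rightarrow> real \<Rightarrow> real" where
  "discrete_laplacian f x y = f (x + 1) y + f (x - 1) y + f x (y + 1) + f x (y - 1) - 4 * f x y"

text \<open>The vertical coordinate \<open>y\<close> is the real part, so that the upper half plane becomes the
  right half plane, on which the principal power \<open>z powr -\<beta>\<close> is holomorphic.\<close>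

definition harmonic_powr :: "real \<Rightarrow> real \<Rightarrow> real \<Rightarrow> real" where
  "harmonic_powr \<beta> x y = Re (Complex y x powr (- of_real \<beta>))"

lemma discrete_laplacian_harmonic_powr_eq:
  assumes "2 \<le> y"
  obtains a1 a2 b1 b2 where "a1 \<in> cball (Complex y x) 1" "a2 \<in> cball (Complex y x) 1"
    "b1 \<in> cball (Complex y x) 1" "b2 \<in> cball (Complex y x) 1"
    and "discrete_laplacian (harmonic_powr \<beta>) x y = \<beta> * (\<beta> + 1) *
      ((Re (b1 powr (- of_real \<beta> - 2)) - Re (a1 powr (- of_real \<beta> - 2)))
     + (Re (b2 powr (- of_real \<beta> - 2)) - Re (a2 powr (- of_real \<beta> - 2)))) / 2"
proof -
  define w0 where "w0 = Complex y x"
  define k where "k = \<beta> * (\<beta> + 1)"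
  define P where "P = (\<lambda>z::complex. z powr (- of_real \<beta> - 2))"
  have Rw: "Re w0 \<ge> 2" using assms by (simp add: w0_def)
  obtain a1 a2 where a: "a1 \<in> cball w0 1" "a2 \<in> cball w0 1" and
    ex: "Re ((w0 + \<i>) powr (- of_real \<beta>)) + Re ((w0 - \<i>) powr (- of_real \<beta>)) - 2 * Re (w0 powr (- of_real \<beta>))
     = (Re (\<i> * \<i> * of_real k * P a1) + Re (\<i> * \<i> * of_real k * P a2)) / 2"
    using Re_powr_second_difference[OF Rw, of \<i> \<beta>] unfolding k_def P_def by auto
  obtain b1 b2 where b: "b1 \<in> cball w0 1" "b2 \<in> cball w0 1" and
    ey: "Re ((w0 + 1) powr (- of_real \<beta>)) + Re ((w0 - 1) powr (- of_real \<beta>)) - 2 * Re (w0 powr (- of_real \<beta>))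
     = (Re (1 * 1 * of_real k * P b1) + Re (1 * 1 * of_real k * P b2)) / 2"
    using Re_powr_second_difference[OF Rw, of 1 \<beta>] unfolding k_def P_def by auto
  have shifts: "Complex y (x + 1) = w0 + \<i>" "Complex y (x - 1) = w0 - \<i>"
    "Complex (y + 1) x = w0 + 1" "Complex (y - 1) x = w0 - 1" "Complex y x = w0"
    by (simp_all add: w0_def complex_eq_iff)
  have "discrete_laplacian (harmonic_powr \<beta>) x y
    = (Re ((w0 + \<i>) powr (- of_real \<beta>)) + Re ((w0 - \<i>) powr (- of_real \<beta>)) - 2 * Re (w0 powr (- of_real \<beta>)))
    + (Re ((w0 + 1) powr (- of_real \<beta>)) + Re ((w0 - 1) powr (- of_real \<beta>)) - 2 * Re (w0 powr (- of_real \<beta>)))"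
    unfolding discrete_laplacian_def harmonic_powr_def shifts by simp
  also have "\<dots> = k * ((Re (P b1) - Re (P a1)) + (Re (P b2) - Re (P a2))) / 2"
    unfolding ex ey by (simp add: field_simps)
  finally have "discrete_laplacian (harmonic_powr \<beta>) x y = \<beta> * (\<beta> + 1) *
      ((Re (b1 powr (- of_real \<beta> - 2)) - Re (a1 powr (- of_real \<beta> - 2)))
     + (Re (b2 powr (- of_real \<beta> - 2)) - Re (a2 powr (- of_real \<beta> - 2)))) / 2"
    unfolding P_def k_def .
  with a b show ?thesis by (rule that[unfolded w0_def[symmetric]])
qed

lemma abs_discrete_laplacian_harmonic_powr_le:
  assumes y: "3 \<le> y" and b0: "0 < \<beta>"
  shows "\<bar>discrete_laplacian (harmonic_powr \<beta>) x y\<bar>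
    \<le> 2 * (\<beta> * (\<beta> + 1)) * ((\<beta> + 2) * (y - 1) powr (- \<beta> - 3))"
proof -
  define w0 where "w0 = Complex y x"
  define L where "L = (\<beta> + 2) * (y - 1) powr (- \<beta> - 3)"
  define P where "P = (\<lambda>z::complex. z powr (- of_real \<beta> - 2))"
  obtain a1 a2 b1 b2 where ab: "a1 \<in> cball w0 1" "a2 \<in> cball w0 1" "b1 \<in> cball w0 1" "b2 \<in> cball w0 1"
    and eq: "discrete_laplacian (harmonic_powr \<beta>) x y = \<beta> * (\<beta> + 1) *
      ((Re (b1 powr (- of_real \<beta> - 2)) - Re (a1 powr (- of_real \<beta> - 2)))
     + (Re (b2 powr (- of_real \<beta> - 2)) - Re (a2 powr (- of_real \<beta> - 2)))) / 2"
    by (rule discrete_laplacian_harmonic_powr_eq[of y x \<beta>, folded w0_def]) (use y in simp)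
  then have eq: "discrete_laplacian (harmonic_powr \<beta>) x y
      = \<beta> * (\<beta> + 1) * ((Re (P b1) - Re (P a1)) + (Re (P b2) - Re (P a2))) / 2"
    unfolding P_def by simp
  have lip: "\<bar>Re (P b) - Re (P a)\<bar> \<le> 2 * L" if "a \<in> cball w0 1" "b \<in> cball w0 1" for a b
  proof -
    have "norm (b - a) \<le> norm (b - w0) + norm (w0 - a)"
      using norm_triangle_ineq[of "b - w0" "w0 - a"] by simp
    also have "\<dots> \<le> 2" using that by (simp add: dist_norm norm_minus_commute)
    finally have ba: "norm (b - a) \<le> 2" .
    have "\<bar>Re (P b) - Re (P a)\<bar> \<le> norm (P b - P a)" using abs_Re_le_cmod[of "P b - P a"] by simp
    also have "\<dots> \<le> L * norm (b - a)"
      using norm_powr_diff_le[of w0 \<beta> b a] that y b0 unfolding P_def L_def by (simp add: w0_def)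
    also have "\<dots> \<le> L * 2" using ba b0 by (intro mult_left_mono) (auto simp: L_def)
    finally show ?thesis by simp
  qed
  have "\<bar>(Re (P b1) - Re (P a1)) + (Re (P b2) - Re (P a2))\<bar> \<le> 4 * L"
    using lip[of a1 b1] lip[of a2 b2] ab by linarith
  then have "\<beta> * (\<beta> + 1) * \<bar>(Re (P b1) - Re (P a1)) + (Re (P b2) - Re (P a2))\<bar> \<le> \<beta> * (\<beta> + 1) * (4 * L)"
    using b0 by (intro mult_left_mono) auto
  then show ?thesis unfolding eq L_def using b0 by (simp add: abs_mult)
qed

lemma powr_second_difference_ge:
  fixes y \<beta> :: real
  assumes y: "2 \<le> y" and b0: "0 < \<beta>"
  shows "\<beta> * (\<beta> + 1) * (y + 1) powr (- \<beta> - 2) \<le> (y + 1) powr -\<beta> + (y - 1) powr -\<beta> - 2 * y powr -\<beta>"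
proof -
  have d1: "((\<lambda>t. (y + t) powr -\<beta>) has_real_derivative -\<beta> * (y + t) powr (-\<beta> - 1)) (at t)"
    if "-1 \<le> t" "t \<le> 1" for t
    using that y by (auto intro!: derivative_eq_intros)
  have d2: "((\<lambda>t. -\<beta> * (y + t) powr (-\<beta> - 1)) has_real_derivative
      \<beta> * (\<beta> + 1) * (y + t) powr (-\<beta> - 2)) (at t)"
    if "-1 \<le> t" "t \<le> 1" for t
    using that y by (auto intro!: derivative_eq_intros simp: algebra_simps)
  obtain t1 t2 where t: "-1 \<le> t1" "t1 \<le> 1" "-1 \<le> t2" "t2 \<le> 1"
    and e: "(y + 1) powr -\<beta> + (y + -1) powr -\<beta> - 2 * (y + 0) powr -\<beta>
      = (\<beta> * (\<beta> + 1) * (y + t1) powr (-\<beta> - 2) + \<beta> * (\<beta> + 1) * (y + t2) powr (-\<beta> - 2)) / 2"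
    by (rule second_difference_Taylor[OF d1 d2])
  have m: "\<beta> * (\<beta> + 1) * (y + 1) powr (- \<beta> - 2) \<le> \<beta> * (\<beta> + 1) * (y + t) powr (- \<beta> - 2)"
    if "-1 \<le> t" "t \<le> 1" for t
    using that y b0 by (intro mult_left_mono powr_mono2') auto
  have "\<beta> * (\<beta> + 1) * (y + 1) powr (- \<beta> - 2)
    \<le> (\<beta> * (\<beta> + 1) * (y + t1) powr (-\<beta> - 2) + \<beta> * (\<beta> + 1) * (y + t2) powr (-\<beta> - 2)) / 2"
    using add_mono[OF m[OF t(1,2)] m[OF t(3,4)]] by (simp add: field_simps)
  then show ?thesis using e by simp
qed

definition barrier :: "real \<Rightarrow> real \<Rightarrow> real \<Rightarrow> real \<Rightarrow> real" where
  "barrier \<beta> \<epsilon> x y = harmonic_powr \<beta> x y - \<epsilon> * y powr -\<beta>"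

lemma laplacian_error_le_correction:
  fixes y \<beta> \<epsilon> :: real
  assumes b0: "0 < \<beta>" and b2: "\<beta> \<le> 2" and e0: "0 < \<epsilon>" and y3: "3 \<le> y" and ye: "128 \<le> \<epsilon> * (y - 1)"
  shows "2 * (\<beta> + 2) * (y - 1) powr (- \<beta> - 3) \<le> \<epsilon> * (y + 1) powr (- \<beta> - 2)"
proof -
  define A where "A = (y - 1) powr (- \<beta> - 2)"
  have A0: "A > 0" using y3 by (simp add: A_def)
  have "(y - 1) powr (- \<beta> - 3) = (y - 1) powr ((- \<beta> - 2) + (-1))" by (simp add: algebra_simps)
  also have "\<dots> = A * (y - 1) powr (-1)" unfolding A_def by (rule powr_add)
  also have "\<dots> = A / (y - 1)" using y3 by (simp add: powr_neg_one divide_inverse)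
  finally have p3: "(y - 1) powr (- \<beta> - 3) = A / (y - 1)" .
  have p2: "A / 16 \<le> (y + 1) powr (- \<beta> - 2)"
  proof -
    have "(2 * (y - 1)) powr (- \<beta> - 2) \<le> (y + 1) powr (- \<beta> - 2)"
      using y3 b0 by (intro powr_mono2') auto
    moreover have "(2 * (y - 1)) powr (- \<beta> - 2) = 2 powr (- \<beta> - 2) * A"
      unfolding A_def using y3 by (subst powr_mult) auto
    moreover have "(2::real) powr (-4) \<le> 2 powr (- \<beta> - 2)"
      using b2 by (intro powr_mono) auto
    moreover have "(2::real) powr (-4) = 1 / 16"
      by (simp add: powr_minus powr_realpow)
    ultimately have "1 / 16 * A \<le> 2 powr (- \<beta> - 2) * A" "2 powr (- \<beta> - 2) * A \<le> (y + 1) powr (- \<beta> - 2)"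
      using A0 by (auto intro!: mult_right_mono)
    then show ?thesis by simp
  qed
  have "2 * (\<beta> + 2) * (y - 1) powr (- \<beta> - 3) \<le> 8 * (A / (y - 1))"
    unfolding p3 using b2 A0 y3 by (intro mult_right_mono) auto
  also have "\<dots> = A * (8 / (y - 1))" by simp
  also have "\<dots> \<le> A * (\<epsilon> / 16)"
    using ye y3 A0 by (intro mult_left_mono) (auto simp: field_simps)
  also have "\<dots> = \<epsilon> * (A / 16)" by simp
  also have "\<dots> \<le> \<epsilon> * (y + 1) powr (- \<beta> - 2)"
    using p2 e0 by (intro mult_left_mono) auto
  finally show ?thesis .
qed

text \<open>The correction \<open>-\<epsilon> y powr -\<beta>\<close> has discrete Laplacian of order \<open>-\<epsilon> y powr (-\<beta> - 2)\<close>,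
  which beats the discretisation error \<open>O(y powr (-\<beta> - 3))\<close> of the harmonic part once \<open>\<epsilon> y\<close> is large.\<close>

lemma discrete_laplacian_barrier_nonpos:
  fixes x y \<beta> \<epsilon> :: real
  assumes b0: "0 < \<beta>" and "\<beta> \<le> 2" and e0: "0 < \<epsilon>" and y3: "3 \<le> y" and "128 \<le> \<epsilon> * (y - 1)"
  shows "discrete_laplacian (barrier \<beta> \<epsilon>) x y \<le> 0"
proof -
  define k where "k = \<beta> * (\<beta> + 1)"
  have "2 * k * ((\<beta> + 2) * (y - 1) powr (- \<beta> - 3)) = k * (2 * (\<beta> + 2) * (y - 1) powr (- \<beta> - 3))"
    by (simp add: mult_ac)
  also have "\<dots> \<le> k * (\<epsilon> * (y + 1) powr (- \<beta> - 2))"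
    using laplacian_error_le_correction[OF assms] b0 by (intro mult_left_mono) (auto simp: k_def)
  also have "\<dots> = \<epsilon> * (k * (y + 1) powr (- \<beta> - 2))" by (simp add: mult_ac)
  also have "\<dots> \<le> \<epsilon> * ((y + 1) powr -\<beta> + (y - 1) powr -\<beta> - 2 * y powr -\<beta>)"
    using powr_second_difference_ge[of y \<beta>] y3 b0 e0 unfolding k_def by (intro mult_left_mono) auto
  finally have correction: "2 * k * ((\<beta> + 2) * (y - 1) powr (- \<beta> - 3))
    \<le> \<epsilon> * ((y + 1) powr -\<beta> + (y - 1) powr -\<beta> - 2 * y powr -\<beta>)" .
  have "discrete_laplacian (barrier \<beta> \<epsilon>) x y = discrete_laplacian (harmonic_powr \<beta>) x y
    - \<epsilon> * ((y + 1) powr -\<beta> + (y - 1) powr -\<beta> - 2 * y powr -\<beta>)"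
    unfolding discrete_laplacian_def barrier_def by (simp add: algebra_simps)
  moreover have "discrete_laplacian (harmonic_powr \<beta>) x y \<le> 2 * k * ((\<beta> + 2) * (y - 1) powr (- \<beta> - 3))"
    using abs_discrete_laplacian_harmonic_powr_le[OF y3 b0, of x] unfolding k_def by linarith
  ultimately show ?thesis using correction by linarith
qed

lemma harmonic_powr_polar:
  assumes y: "0 < y"
  shows "harmonic_powr \<beta> x y = norm (Complex y x) powr -\<beta> * cos (\<beta> * arctan (x / y))"
proof -
  define z where "z = Complex y x"
  have z0: "z \<noteq> 0" using y by (auto simp: z_def complex_eq_iff)
  have Im: "Im (Ln z) = arctan (x / y)"
    using Arg_eq_Im_Ln[OF z0] arg_conv_arctan[of z] y by (simp add: z_def)
  have "harmonic_powr \<beta> x y = Re (exp (- of_real \<beta> * Ln z))"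
    unfolding harmonic_powr_def z_def[symmetric] using z0 by (simp add: powr_def)
  also have "\<dots> = exp (- \<beta> * ln (norm z)) * cos (- \<beta> * arctan (x / y))"
    using z0 by (simp add: Re_exp Im)
  also have "\<dots> = norm z powr -\<beta> * cos (\<beta> * arctan (x / y))"
    using z0 by (simp add: powr_def)
  finally show ?thesis by (simp add: z_def)
qed

lemma harmonic_powr_le_powr:
  assumes y: "0 < y" and b0: "0 < \<beta>"
  shows "harmonic_powr \<beta> x y \<le> y powr -\<beta>"
proof -
  have ny: "y \<le> norm (Complex y x)" using complex_Re_le_cmod[of "Complex y x"] by simp
  have "harmonic_powr \<beta> x y \<le> norm (Complex y x) powr -\<beta> * 1"
    unfolding harmonic_powr_polar[OF y] by (intro mult_left_mono) auto
  also have "\<dots> \<le> y powr -\<beta>" using ny y b0 by (simp add: powr_mono2')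
  finally show ?thesis .
qed

lemma norm_powr_ge_in_cone:
  assumes y: "0 < y" and b0: "0 < \<beta>" and b2: "\<beta> \<le> 2" and c: "0 < c" and cone: "c * \<bar>x\<bar> \<le> 2 * y"
  shows "(c / (c + 2))\<^sup>2 * y powr -\<beta> \<le> norm (Complex y x) powr -\<beta>"
proof -
  have "norm (Complex y x) \<le> \<bar>y\<bar> + \<bar>x\<bar>" using cmod_le[of "Complex y x"] by simp
  also have "\<dots> \<le> y * ((c + 2) / c)" using y cone c by (simp add: field_simps)
  finally have "(y * ((c + 2) / c)) powr -\<beta> \<le> norm (Complex y x) powr -\<beta>"
    using y b0 by (intro powr_mono2') (auto simp: complex_eq_iff)
  moreover have "(y * ((c + 2) / c)) powr -\<beta> = y powr -\<beta> * ((c + 2) / c) powr -\<beta>"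
    using y c by (subst powr_mult) auto
  moreover have "((c + 2) / c) powr (-2) \<le> ((c + 2) / c) powr -\<beta>"
    using b2 c by (intro powr_mono) (auto simp: field_simps)
  moreover have "((c + 2) / c) powr (-2) = (c / (c + 2))\<^sup>2"
    using c by (simp add: powr_minus powr_realpow power_divide)
  ultimately show ?thesis
    by (smt (verit) mult.commute mult_left_mono powr_ge_zero)
qed

lemma harmonic_powr_ge_in_cone:
  assumes y: "0 < y" and b0: "0 < \<beta>" and b2: "\<beta> \<le> 2" and c: "0 < c"
    and cone: "c * \<bar>x\<bar> \<le> 2 * y" and angle: "\<beta> * arctan (2 / c) \<le> pi / 2"
  shows "cos (\<beta> * arctan (2 / c)) * (c / (c + 2))\<^sup>2 * y powr -\<beta> \<le> harmonic_powr \<beta> x y"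
proof -
  define \<kappa> where "\<kappa> = cos (\<beta> * arctan (2 / c))"
  have "0 \<le> \<beta> * arctan (2 / c)" using b0 c by (simp add: zero_le_arctan_iff)
  then have k0: "0 \<le> \<kappa>" unfolding \<kappa>_def using angle by (intro cos_ge_zero) auto
  have "\<kappa> \<le> cos (\<beta> * arctan (\<bar>x\<bar> / y))" unfolding \<kappa>_def
  proof (rule cos_monotone_0_pi_le)
    show "0 \<le> \<beta> * arctan (\<bar>x\<bar> / y)" using b0 y by (simp add: zero_le_arctan_iff)
    have "\<bar>x\<bar> / y \<le> 2 / c" using cone y c by (simp add: field_simps)
    then show "\<beta> * arctan (\<bar>x\<bar> / y) \<le> \<beta> * arctan (2 / c)"
      using b0 by (simp add: arctan_monotone')
    show "\<beta> * arctan (2 / c) \<le> pi" using angle pi_gt_zero by linarith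
  qed
  also have "\<dots> = cos (\<beta> * arctan (x / y))"
  proof -
    have "\<bar>\<beta> * arctan (x / y)\<bar> = \<beta> * arctan (\<bar>x\<bar> / y)" using b0 y by (simp add: abs_mult abs_arctan)
    then show ?thesis by (metis cos_abs_real)
  qed
  finally have cos_ge: "\<kappa> \<le> cos (\<beta> * arctan (x / y))" .
  have norm_ge: "(c / (c + 2))\<^sup>2 * y powr -\<beta> \<le> norm (Complex y x) powr -\<beta>"
    using norm_powr_ge_in_cone[OF y b0 b2 c cone] .
  have "\<kappa> * (c / (c + 2))\<^sup>2 * y powr -\<beta> \<le> \<kappa> * norm (Complex y x) powr -\<beta>"
    using mult_left_mono[OF norm_ge k0] by (simp add: mult.assoc)
  also have "\<dots> \<le> cos (\<beta> * arctan (x / y)) * norm (Complex y x) powr -\<beta>"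
    using cos_ge by (rule mult_right_mono) simp
  also have "\<dots> = harmonic_powr \<beta> x y" unfolding harmonic_powr_polar[OF y] by simp
  finally show ?thesis unfolding \<kappa>_def .
qed

lemma barrier_le_powr:
  assumes "0 < y" "0 < \<beta>" "0 \<le> \<epsilon>"
  shows "barrier \<beta> \<epsilon> x y \<le> y powr -\<beta>"
proof -
  have "0 \<le> \<epsilon> * y powr -\<beta>" using assms by simp
  then show ?thesis using harmonic_powr_le_powr[of y \<beta> x] assms unfolding barrier_def by linarith
qed

text \<open>A harmonic function that is positive on a cone of half-opening \<open>\<theta> < pi / 2\<close> around the
  vertical axis may decay like \<open>y powr -\<beta>\<close> for any \<open>\<beta> < pi / (2 * \<theta>)\<close>, in particular for
  some \<open>\<beta> > 1\<close>.\<close>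

lemma barrier_ge_in_cone_exists:
  assumes c: "0 < c"
  obtains \<beta> \<epsilon> where "1 < \<beta>" "\<beta> \<le> 2" "0 < \<epsilon>"
    and "\<And>x y. 0 < y \<Longrightarrow> c * \<bar>x\<bar> \<le> 2 * y \<Longrightarrow> \<epsilon> * y powr -\<beta> \<le> barrier \<beta> \<epsilon> x y"
proof -
  define \<theta> where "\<theta> = arctan (2 / c)"
  have th0: "0 < \<theta>" using c by (simp add: \<theta>_def)
  have thpi: "\<theta> < pi / 2" unfolding \<theta>_def by (rule arctan_ubound)
  define \<beta> where "\<beta> = min (3/2) ((1 + pi / (2 * \<theta>)) / 2)"
  have "1 < pi / (2 * \<theta>)" using th0 thpi by (simp add: field_simps)
  then have b1: "1 < \<beta>" by (simp add: \<beta>_def)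
  have b2: "\<beta> \<le> 2" by (simp add: \<beta>_def)
  have "\<beta> \<le> (1 + pi / (2 * \<theta>)) / 2" unfolding \<beta>_def by (rule min.cobounded2)
  then have "\<beta> * \<theta> \<le> ((1 + pi / (2 * \<theta>)) / 2) * \<theta>"
    using th0 by (intro mult_right_mono) auto
  also have "\<dots> = (\<theta> + pi / 2) / 2" using th0 by (simp add: field_simps)
  finally have angle: "\<beta> * \<theta> < pi / 2" using thpi by simp
  define \<epsilon> where "\<epsilon> = cos (\<beta> * \<theta>) * (c / (c + 2))\<^sup>2 / 2"
  have "0 < \<beta> * \<theta>" using th0 b1 by simp
  then have "0 < cos (\<beta> * \<theta>)" using angle by (intro cos_gt_zero_pi) auto
  then have e0: "0 < \<epsilon>" using c by (simp add: \<epsilon>_def)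
  show ?thesis
  proof (rule that[OF b1 b2 e0])
    fix x y :: real assume "0 < y" "c * \<bar>x\<bar> \<le> 2 * y"
    then have "2 * \<epsilon> * y powr -\<beta> \<le> harmonic_powr \<beta> x y"
      using harmonic_powr_ge_in_cone[of y \<beta> c x] b1 b2 c angle by (simp add: \<epsilon>_def \<theta>_def)
    then show "\<epsilon> * y powr -\<beta> \<le> barrier \<beta> \<epsilon> x y" by (simp add: barrier_def)
  qed
qed

section \<open>Escape from the cone\<close>

lemma mem_of_col_height_ge:
  fixes B :: "pt set" and x1 y :: int and t :: real
  assumes h: "ereal t \<le> col_height B x1" and y1: "1 \<le> y" and yt: "real_of_int y \<le> t"
  shows "(x1, y) \<in> B"
proof (rule ccontr)
  assume nB: "(x1, y) \<notin> B"
  have "col_height B x1 \<le> ereal (real_of_int (y - 1))"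
    unfolding col_height_def
  proof (rule Sup_least, clarify)
    fix x2 :: int assume x2: "0 \<le> x2" "\<forall>y'\<in>{1..x2}. (x1, y') \<in> B"
    then have "x2 < y" using y1 nB by force
    then show "ereal (real_of_int x2) \<le> ereal (real_of_int (y - 1))" by simp
  qed
  with h have "ereal t \<le> ereal (real_of_int (y - 1))" by (rule order_trans)
  then show False using yt by simp
qed

lemma not_mem_in_cone:
  fixes B :: "pt set" and c M :: real and H :: int
  assumes c: "0 < c"
    and col: "\<forall>x1::int. \<bar>real_of_int x1\<bar> \<ge> M \<longrightarrow> col_height B x1 \<ge> ereal \<bar>c * real_of_int x1\<bar>"
    and HM: "c * \<bar>M\<bar> \<le> real_of_int H" and H1: "1 \<le> H"
    and p: "p \<notin> B" "H \<le> snd p"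
  shows "c * \<bar>real_of_int (fst p)\<bar> < real_of_int (snd p)"
proof (cases "M \<le> \<bar>real_of_int (fst p)\<bar>")
  case True
  show ?thesis
  proof (rule ccontr)
    assume "\<not> ?thesis"
    then have le: "real_of_int (snd p) \<le> \<bar>c * real_of_int (fst p)\<bar>" using c by (simp add: abs_mult)
    have "(fst p, snd p) \<in> B"
      by (rule mem_of_col_height_ge[OF col[rule_format, OF True] _ le]) (use p H1 in auto)
    then show False using p by simp
  qed
next
  case False
  then have "c * \<bar>real_of_int (fst p)\<bar> < c * \<bar>M\<bar>" using c by (intro mult_strict_left_mono) auto
  also have "\<dots> \<le> real_of_int (snd p)" using HM p by linarith
  finally show ?thesis .
qed

lemma finite_card_in_cone_on_hline:
  fixes S :: "pt set" and c :: real and n :: nat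
  assumes c: "0 < c" and S: "S \<subseteq> hline (int n)" and cone: "\<forall>p\<in>S. c * \<bar>real_of_int (fst p)\<bar> < real n"
  shows "finite S" and "real (card S) \<le> 2 * real n / c + 1"
proof -
  define f where "f = \<lfloor>real n / c\<rfloor>"
  have SS: "S \<subseteq> (\<lambda>a. (a, int n)) ` {-f..f}"
  proof
    fix z assume z: "z \<in> S"
    then have "c * \<bar>real_of_int (fst z)\<bar> < real n" using cone by blast
    then have "\<bar>real_of_int (fst z)\<bar> \<le> real n / c" using c by (simp add: field_simps)
    then have "\<bar>fst z\<bar> \<le> f" unfolding f_def by (simp add: le_floor_iff)
    moreover have "snd z = int n" using z S by (auto simp: hline_def)
    ultimately show "z \<in> (\<lambda>a. (a, int n)) ` {-f..f}"
      by (intro image_eqI[of _ _ "fst z"]) (auto simp: prod_eq_iff)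
  qed
  then show "finite S" by (rule finite_subset) simp
  have "card S \<le> card ((\<lambda>a. (a, int n)) ` {-f..f})" using SS by (intro card_mono) auto
  also have "\<dots> \<le> card {-f..f}" by (rule card_image_le) simp
  finally have "real (card S) \<le> real (nat (2 * f + 1))" by simp
  also have "\<dots> \<le> 2 * real n / c + 1"
  proof -
    have "real_of_int f \<le> real n / c" unfolding f_def by simp
    moreover have "0 \<le> real n / c" using c by simp
    ultimately show ?thesis by (cases "0 \<le> 2 * f + 1") auto
  qed
  finally show "real (card S) \<le> 2 * real n / c + 1" .
qed

lemma hit_at_le_reaches_via:
  fixes A B :: "pt set" and H :: int
  assumes BA: "B \<subseteq> A" and xH: "snd x < H"
  shows "hit_at A z x \<le> emeasure srw_space
    {w \<in> space srw_space. reaches_via {p. H \<le> snd p \<and> p \<notin> B} {p. snd p < H} z w}"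
proof -
  let ?hit = "{w \<in> space srw_space. \<exists>n. walk z w n \<in> A \<and> (\<forall>m<n. walk z w m \<notin> A) \<and> walk z w n = x}"
  have "?hit \<subseteq> {w \<in> space srw_space. reaches_via {p. H \<le> snd p \<and> p \<notin> B} {p. snd p < H} z w}"
  proof (rule subsetI)
    fix w assume "w \<in> ?hit"
    then obtain n where w: "w \<in> space srw_space" and n: "\<forall>m<n. walk z w m \<notin> A" "walk z w n = x"
      by blast
    define k where "k = (LEAST k. snd (walk z w k) < H)"
    have ex: "snd (walk z w n) < H" using n xH by simp
    have k: "snd (walk z w k) < H" unfolding k_def using ex by (rule LeastI)
    have kn: "k \<le> n" unfolding k_def using ex by (rule Least_le)
    have "walk z w m \<in> {p. H \<le> snd p \<and> p \<notin> B}" if "m < k" for m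
      using not_less_Least[OF that[unfolded k_def]] n(1) that kn BA by auto
    with k w show "w \<in> {w \<in> space srw_space. reaches_via {p. H \<le> snd p \<and> p \<notin> B} {p. snd p < H} z w}"
      unfolding reaches_via_def by blast
  qed
  then show ?thesis unfolding hit_at_def by (rule emeasure_mono) measurable
qed

locale cone_escape =
  fixes B :: "pt set" and c \<beta> \<epsilon> :: real and H :: int
  assumes c_pos: "0 < c" and beta_gt_1: "1 < \<beta>" and beta_le_2: "\<beta> \<le> 2" and eps_pos: "0 < \<epsilon>"
    and barrier_ge: "\<And>x y. 0 < y \<Longrightarrow> c * \<bar>x\<bar> \<le> 2 * y \<Longrightarrow> \<epsilon> * y powr -\<beta> \<le> barrier \<beta> \<epsilon> x y"
    and H_ge_3: "3 \<le> H" and c_le_H: "c \<le> real_of_int H" and H_large: "128 \<le> \<epsilon> * (real_of_int H - 1)"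
    and outside_in_cone: "\<And>p. p \<notin> B \<Longrightarrow> H \<le> snd p \<Longrightarrow> c * \<bar>real_of_int (fst p)\<bar> < real_of_int (snd p)"
begin

definition barrier_pt :: "pt \<Rightarrow> real" where
  "barrier_pt p = barrier \<beta> \<epsilon> (real_of_int (fst p)) (real_of_int (snd p))"

definition lyapunov_scale :: real where
  "lyapunov_scale = real_of_int H powr \<beta> / \<epsilon>"

text \<open>The scaling makes the Lyapunov function at least 1 on the row \<open>H - 1\<close>, the first row of the
  target reachable from the domain.\<close>

definition lyapunov :: "pt \<Rightarrow> ennreal" where
  "lyapunov p = (if snd p < H then 1 else if p \<notin> B then ennreal (lyapunov_scale * barrier_pt p) else 0)"

lemma lyapunov_scale_pos: "0 < lyapunov_scale"
  using eps_pos H_ge_3 by (simp add: lyapunov_scale_def)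

lemma barrier_pt_ge:
  assumes "1 \<le> snd q" "c * \<bar>real_of_int (fst q)\<bar> \<le> 2 * real_of_int (snd q)"
  shows "\<epsilon> * real_of_int (snd q) powr -\<beta> \<le> barrier_pt q"
  unfolding barrier_pt_def using assms by (intro barrier_ge) auto

lemma barrier_pt_nonneg:
  assumes "1 \<le> snd q" "c * \<bar>real_of_int (fst q)\<bar> \<le> 2 * real_of_int (snd q)"
  shows "0 \<le> barrier_pt q"
  using barrier_pt_ge[OF assms] eps_pos by (smt (verit) mult_nonneg_nonneg powr_ge_zero)

lemma neighbour_near_cone:
  assumes p: "p \<notin> B" "H \<le> snd p" and q: "q \<in> {p + (1, 0), p + (-1, 0), p + (0, 1), p + (0, -1)}"
  shows "1 \<le> snd q" and "c * \<bar>real_of_int (fst q)\<bar> \<le> 2 * real_of_int (snd q)"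
proof -
  obtain a b where ab: "p = (a, b)" by (cases p)
  have cone: "c * \<bar>real_of_int a\<bar> < real_of_int b" using outside_in_cone[OF p] ab by simp
  have b: "H \<le> b" using p ab by simp
  then show "1 \<le> snd q" using q H_ge_3 ab by auto
  have shift: "c * \<bar>real_of_int a + t\<bar> \<le> c * \<bar>real_of_int a\<bar> + c" if "\<bar>t\<bar> \<le> 1" for t
  proof -
    have "c * \<bar>real_of_int a + t\<bar> \<le> c * (\<bar>real_of_int a\<bar> + 1)"
      using that c_pos abs_triangle_ineq[of "real_of_int a" t] by (intro mult_left_mono) auto
    then show ?thesis by (simp add: algebra_simps)
  qed
  from q consider "q = (a + 1, b)" | "q = (a - 1, b)" | "q = (a, b + 1)" | "q = (a, b - 1)"
    using ab by auto
  then show "c * \<bar>real_of_int (fst q)\<bar> \<le> 2 * real_of_int (snd q)"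
  proof cases
    case 1
    then show ?thesis using shift[of 1] cone b c_le_H by simp
  next
    case 2
    then show ?thesis using shift[of "-1"] cone b c_le_H by simp
  next
    case 3
    then show ?thesis using cone b H_ge_3 by simp
  next
    case 4
    then show ?thesis using cone b H_ge_3 by simp
  qed
qed

lemma barrier_pt_superharmonic:
  assumes "H \<le> snd p"
  shows "barrier_pt (p + (1, 0)) + barrier_pt (p + (-1, 0)) + barrier_pt (p + (0, 1)) + barrier_pt (p + (0, -1))
    \<le> 4 * barrier_pt p"
proof -
  obtain a b where ab: "p = (a, b)" by (cases p)
  have "3 \<le> real_of_int b" using assms H_ge_3 ab by simp
  moreover have "128 \<le> \<epsilon> * (real_of_int b - 1)"
    using H_large assms ab eps_pos by (smt (verit) mult_left_mono of_int_le_iff snd_conv)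
  ultimately have "discrete_laplacian (barrier \<beta> \<epsilon>) (real_of_int a) (real_of_int b) \<le> 0"
    using beta_gt_1 beta_le_2 eps_pos by (intro discrete_laplacian_barrier_nonpos) auto
  then show ?thesis by (simp add: ab barrier_pt_def discrete_laplacian_def)
qed

lemma lyapunov_le_barrier_pt:
  assumes "1 \<le> snd q" "c * \<bar>real_of_int (fst q)\<bar> \<le> 2 * real_of_int (snd q)" "H - 1 \<le> snd q"
  shows "lyapunov q \<le> ennreal (lyapunov_scale * barrier_pt q)"
proof (cases "snd q < H")
  case True
  then have "snd q = H - 1" using assms(3) by linarith
  then have "real_of_int H powr -\<beta> \<le> real_of_int (snd q) powr -\<beta>"
    using H_ge_3 beta_gt_1 by (intro powr_mono2') auto
  then have "\<epsilon> * real_of_int H powr -\<beta> \<le> barrier_pt q"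
    using barrier_pt_ge[OF assms(1,2)] eps_pos by (smt (verit) mult_left_mono)
  then have "lyapunov_scale * (\<epsilon> * real_of_int H powr -\<beta>) \<le> lyapunov_scale * barrier_pt q"
    using lyapunov_scale_pos by (intro mult_left_mono) auto
  moreover have "lyapunov_scale * (\<epsilon> * real_of_int H powr -\<beta>) = 1"
    using eps_pos H_ge_3 by (simp add: lyapunov_scale_def powr_minus field_simps)
  ultimately show ?thesis using True by (simp add: lyapunov_def)
qed (simp add: lyapunov_def)

lemma lyapunov_superharmonic:
  assumes p: "p \<notin> B" "H \<le> snd p"
  shows "srw_mean lyapunov p \<le> lyapunov p"
proof -
  define N where "N = {p + (1, 0), p + (-1, 0), p + (0, 1), p + (0, -1)}"
  have near: "1 \<le> snd q" "c * \<bar>real_of_int (fst q)\<bar> \<le> 2 * real_of_int (snd q)" if "q \<in> N" for q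
    using neighbour_near_cone[OF p] that unfolding N_def by blast+
  have low: "H - 1 \<le> snd q" if "q \<in> N" for q
    using that p(2) unfolding N_def by auto
  have G: "lyapunov q \<le> ennreal (lyapunov_scale * barrier_pt q)" if "q \<in> N" for q
    using lyapunov_le_barrier_pt near low that by blast
  have U: "0 \<le> barrier_pt q" if "q \<in> N" for q
    using barrier_pt_nonneg near that by blast
  have "srw_mean lyapunov p \<le> (ennreal (lyapunov_scale * barrier_pt (p + (1, 0))) + ennreal (lyapunov_scale * barrier_pt (p + (-1, 0)))
      + ennreal (lyapunov_scale * barrier_pt (p + (0, 1))) + ennreal (lyapunov_scale * barrier_pt (p + (0, -1)))) / 4"
    unfolding srw_mean_eq by (intro divide_right_mono_ennreal add_mono G) (auto simp: N_def)
  also have "\<dots> = ennreal (lyapunov_scale * (barrier_pt (p + (1, 0)) + barrier_pt (p + (-1, 0))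
      + barrier_pt (p + (0, 1)) + barrier_pt (p + (0, -1)))) / 4"
    using U lyapunov_scale_pos unfolding N_def
    by (simp add: algebra_simps del: ennreal_plus add: ennreal_plus[symmetric])
  also have "\<dots> \<le> ennreal (lyapunov_scale * (4 * barrier_pt p)) / 4"
    using barrier_pt_superharmonic[OF p(2)] lyapunov_scale_pos
    by (intro divide_right_mono_ennreal ennreal_leI mult_left_mono) auto
  also have "\<dots> = ennreal (lyapunov_scale * barrier_pt p)"
  proof -
    have "0 \<le> barrier_pt p"
    proof (rule barrier_pt_nonneg)
      show "1 \<le> snd p" using p(2) H_ge_3 by simp
      show "c * \<bar>real_of_int (fst p)\<bar> \<le> 2 * real_of_int (snd p)"
        using outside_in_cone[OF p] p(2) H_ge_3 by simp
    qed
    then have "ennreal (lyapunov_scale * (4 * barrier_pt p)) / ennreal 4 = ennreal (lyapunov_scale * (4 * barrier_pt p) / 4)"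
      using lyapunov_scale_pos by (intro divide_ennreal) auto
    then show ?thesis by simp
  qed
  also have "\<dots> = lyapunov p" using p by (simp add: lyapunov_def)
  finally show ?thesis .
qed

lemma escape_probability_le:
  assumes "z \<notin> B" "H \<le> snd z"
  shows "emeasure srw_space {w \<in> space srw_space. reaches_via {p. H \<le> snd p \<and> p \<notin> B} {p. snd p < H} z w}
    \<le> ennreal (lyapunov_scale * real_of_int (snd z) powr -\<beta>)"
proof -
  have "emeasure srw_space {w \<in> space srw_space. reaches_via {p. H \<le> snd p \<and> p \<notin> B} {p. snd p < H} z w}
      \<le> lyapunov z"
  proof (rule emeasure_reaches_via_le)
    show "\<forall>p\<in>{p. snd p < H}. 1 \<le> lyapunov p" by (simp add: lyapunov_def)
    show "\<forall>p\<in>{p. H \<le> snd p \<and> p \<notin> B} - {p. snd p < H}. srw_mean lyapunov p \<le> lyapunov p"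
      using lyapunov_superharmonic by auto
  qed
  also have "\<dots> = ennreal (lyapunov_scale * barrier_pt z)" using assms by (simp add: lyapunov_def)
  also have "\<dots> \<le> ennreal (lyapunov_scale * real_of_int (snd z) powr -\<beta>)"
    using barrier_le_powr[of "real_of_int (snd z)" \<beta> \<epsilon>] assms H_ge_3 beta_gt_1 eps_pos lyapunov_scale_pos
    unfolding barrier_pt_def by (intro ennreal_leI mult_left_mono) auto
  finally show ?thesis .
qed

lemma harm_N_le:
  assumes x: "x \<in> B" "snd x < H" and N: "H \<le> int N"
  shows "harm_N B N x \<le> ennreal ((2 * real N / c + 1) * (lyapunov_scale * real N powr -\<beta>))"
proof -
  define S where "S = hline (int N) - B"
  have cone: "\<forall>p\<in>S. c * \<bar>real_of_int (fst p)\<bar> < real N"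
  proof
    fix p assume "p \<in> S"
    then show "c * \<bar>real_of_int (fst p)\<bar> < real N"
      using outside_in_cone[of p] N by (auto simp: S_def hline_def)
  qed
  have S: "S \<subseteq> hline (int N)" by (simp add: S_def)
  have hit: "hit_at (B \<union> hline 0) z x \<le> ennreal (lyapunov_scale * real N powr -\<beta>)" if "z \<in> S" for z
  proof -
    have z: "z \<notin> B" "snd z = int N" using that by (auto simp: S_def hline_def)
    have "hit_at (B \<union> hline 0) z x
        \<le> emeasure srw_space {w \<in> space srw_space. reaches_via {p. H \<le> snd p \<and> p \<notin> B} {p. snd p < H} z w}"
      using x(2) by (intro hit_at_le_reaches_via) auto
    also have "\<dots> \<le> ennreal (lyapunov_scale * real N powr -\<beta>)"
      using escape_probability_le[of z] z N by simp
    finally show ?thesis .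
  qed
  have "harm_N B N x = (\<Sum>z\<in>S. hit_at (B \<union> hline 0) z x)"
    unfolding harm_N_def S_def[symmetric] using finite_card_in_cone_on_hline(1)[OF c_pos S cone] by simp
  also have "\<dots> \<le> of_nat (card S) * ennreal (lyapunov_scale * real N powr -\<beta>)"
    using hit by (rule sum_bounded_above)
  also have "\<dots> = ennreal (real (card S) * (lyapunov_scale * real N powr -\<beta>))"
    using lyapunov_scale_pos by (simp add: ennreal_mult ennreal_of_nat_eq_real_of_nat)
  also have "\<dots> \<le> ennreal ((2 * real N / c + 1) * (lyapunov_scale * real N powr -\<beta>))"
    using finite_card_in_cone_on_hline(2)[OF c_pos S cone] lyapunov_scale_pos
    by (intro ennreal_leI mult_right_mono) auto
  finally show ?thesis .
qed

lemma harm_N_tendsto_0: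
  assumes "x \<in> B" "snd x < H"
  shows "(\<lambda>N. harm_N B N x) \<longlonglongrightarrow> 0"
proof (rule tendsto_sandwich[where f = "\<lambda>_. 0" and h = "\<lambda>N. ennreal ((2 * real N / c + 1) * (lyapunov_scale * real N powr -\<beta>))"])
  show "\<forall>\<^sub>F N in sequentially. harm_N B N x \<le> ennreal ((2 * real N / c + 1) * (lyapunov_scale * real N powr -\<beta>))"
    using harm_N_le[OF assms] by (intro eventually_sequentiallyI[of "nat H"]) auto
  have "(\<lambda>N. lyapunov_scale * (2 / c * real N powr (1 - \<beta>) + real N powr -\<beta>)) \<longlonglongrightarrow> lyapunov_scale * (2 / c * 0 + 0)"
    using beta_gt_1 by (intro tendsto_intros tendsto_neg_powr filterlim_real_sequentially) auto
  moreover have "\<forall>\<^sub>F N in sequentially. lyapunov_scale * (2 / c * real N powr (1 - \<beta>) + real N powr -\<beta>)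
      = (2 * real N / c + 1) * (lyapunov_scale * real N powr -\<beta>)"
  proof (rule eventually_sequentiallyI[of 1])
    fix N :: nat assume "1 \<le> N"
    have "real N powr (1 + -\<beta>) = real N powr 1 * real N powr -\<beta>" by (rule powr_add)
    then have "real N * real N powr -\<beta> = real N powr (1 - \<beta>)" using \<open>1 \<le> N\<close> by simp
    then show "lyapunov_scale * (2 / c * real N powr (1 - \<beta>) + real N powr -\<beta>)
      = (2 * real N / c + 1) * (lyapunov_scale * real N powr -\<beta>)"
      by (simp add: algebra_simps)
  qed
  ultimately have "(\<lambda>N. (2 * real N / c + 1) * (lyapunov_scale * real N powr -\<beta>)) \<longlonglongrightarrow> 0"
    using Lim_transform_eventually by fastforce
  then show "(\<lambda>N. ennreal ((2 * real N / c + 1) * (lyapunov_scale * real N powr -\<beta>))) \<longlonglongrightarrow> 0"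
    using tendsto_ennrealI by fastforce
qed auto

end

theorem theorem1:
  fixes B :: "pt set" and c M :: real and x :: pt
  assumes "B \<subseteq> upper_half"
    and "0 < c"
    and "\<forall>x1::int. \<bar>real_of_int x1\<bar> \<ge> M \<longrightarrow> col_height B x1 \<ge> ereal \<bar>c * real_of_int x1\<bar>"
    and "x \<in> B"
  shows "(\<lambda>N. harm_N B N x) \<longlonglongrightarrow> 0"
proof -
  note c = assms(2) and col = assms(3) and xB = assms(4)
  obtain \<beta> \<epsilon> where \<beta>: "1 < \<beta>" "\<beta> \<le> 2" and \<epsilon>: "0 < \<epsilon>"
    and barrier_ge: "\<And>x y. 0 < y \<Longrightarrow> c * \<bar>x\<bar> \<le> 2 * y \<Longrightarrow> \<epsilon> * y powr -\<beta> \<le> barrier \<beta> \<epsilon> x y"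
    using barrier_ge_in_cone_exists[OF c] by blast
  obtain H0 :: int where H0: "c * \<bar>M\<bar> + c + 3 + 128 / \<epsilon> \<le> real_of_int H0"
    using ex_le_of_int by blast
  define H where "H = max H0 (snd x + 1)"
  have "c * \<bar>M\<bar> + c + 3 + 128 / \<epsilon> \<le> real_of_int H" "0 \<le> c * \<bar>M\<bar>" "0 \<le> 128 / \<epsilon>"
    using H0 c \<epsilon> by (auto simp: H_def)
  then have HM: "c * \<bar>M\<bar> \<le> real_of_int H" and cH: "c \<le> real_of_int H"
    and H3: "3 \<le> real_of_int H" and He: "128 / \<epsilon> \<le> real_of_int H - 1"
    using c by linarith+
  have outside: "c * \<bar>real_of_int (fst p)\<bar> < real_of_int (snd p)" if "p \<notin> B" "H \<le> snd p" for p
    using not_mem_in_cone[OF c col HM] that H3 by simp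
  interpret cone_escape B c \<beta> \<epsilon> H
    using c \<beta> \<epsilon> barrier_ge cH H3 He outside by unfold_locales (auto simp: field_simps)
  show ?thesis by (rule harm_N_tendsto_0[OF xB]) (simp add: H_def)
qed

end
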